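(* Let $p,q$ be integers with $1+|p|<|q|$ and let $g\in\mathbb{Z}[x]$. Let $\varphi_g:\mathrm{Dom}_{p,q}\to\mathrm{Dom}_{p,q}$ be the map sending $w$ to the unique $w'\in\mathrm{Dom}_{p,q}$ with $\psi_{p,q}(w')=[g\cdot f_w]_\sim$, where $f_w$ is the polynomial represented by $w$. Then $\varphi_g$ is FA-recognizable (its graph $\{(w,\varphi_g(w))\}$ is an FA-recognizable binary relation).
   Context: Let $p,q$ be integers with $1+|p|<|q|$ and $t(x)=x^2+px-q$. For $f,g\in\mathbb{Z}[x]$ write $f\sim g$ if $t$ divides $f-g$; identify $\mathbb{Z}^2$ with the additive group of $\mathbb{Z}[x]/\langle t\rangle$ via $(h_1,h_2)\mapsto[h_1x+h_2]_\sim$, and put $\eta=[x]_\sim$, $\xi=[1]_\sim$. A polynomial $\sum a_ix^i$ is reduced if $|a_i|<|q|$ for all $i$. Let $\Sigma_q=\{-(|q|-1),\dots,|q|-1\}$ with the order $-(|q|-1)<\dots<|q|-1$; a string $a_0a_1\dots a_n\in\Sigma_q^*$ represents the reduced polynomial $a_nx^n+\dots+a_1x+a_0$, and two strings are equivalent if their polynomials are $\sim$-equivalent. $\mathrm{Dom}_{p,q}$ is the set of $w\in\Sigma_q^*$ such that no string $u$ strictly smaller than $w$ in the length-lexicographic order on $\Sigma_q^*$ is equivalent to $w$, and $\psi_{p,q}:\mathrm{Dom}_{p,q}\to\mathbb{Z}^2$ sends $w$ to the $\sim$-class of the polynomial it represents (this is a bijection). For strings $w_1,\dots,w_m$ over an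 alphabet $\Sigma$, their convolution $w_1\otimes\dots\otimes w_m$ is the string over $(\Sigma\cup\{\diamond\})^m$ of length $\max|w_i|$ whose $k$-th letter is the column $(\sigma_1,\dots,\sigma_m)$, $\sigma_i$ being the $k$-th letter of $w_i$ if $k\le|w_i|$ and the padding symbol $\diamond$ otherwise. A relation $R\subseteq(\Sigma^* )^m$ is FA-recognizable if $\{w_1\otimes\dots\otimes w_m:(w_1,\dots,w_m)\in R\}$ is accepted by a finite automaton; a function is FA-recognizable if its graph is. *)

theory Defs
  imports "HOL-Computational_Algebra.Polynomial"
begin

definition tpoly :: "int \<Rightarrow> int \<Rightarrow> int poly" where
  "tpoly p q = [:-q, p, 1:]"

definition sim :: "int \<Rightarrow> int \<Rightarrow> int poly \<Rightarrow> int poly \<Rightarrow> bool" where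
  "sim p q f g \<longleftrightarrow> tpoly p q dvd (f - g)"

definition Sigma :: "int \<Rightarrow> int set" where
  "Sigma q = {-(\<bar>q\<bar> - 1) .. \<bar>q\<bar> - 1}"

(* the string a_0 a_1 ... a_n represents a_n x^n + ... + a_1 x + a_0 *)
definition strpoly :: "int list \<Rightarrow> int poly" where
  "strpoly w = Poly w"

definition str_equiv :: "int \<Rightarrow> int \<Rightarrow> int list \<Rightarrow> int list \<Rightarrow> bool" where
  "str_equiv p q u w \<longleftrightarrow> sim p q (strpoly u) (strpoly w)"

definition llex_less :: "int list \<Rightarrow> int list \<Rightarrow> bool" where
  "llex_less u w \<longleftrightarrow> length u < length w \<or>
     (length u = length w \<and> (\<exists>k < length u. take k u = take k w \<and> u ! k < w ! k))"

definition Dom :: "int \<Rightarrow> int \<Rightarrow> int list set" where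
  "Dom p q = {w. set w \<subseteq> Sigma q \<and>
      \<not> (\<exists>u. set u \<subseteq> Sigma q \<and> llex_less u w \<and> str_equiv p q u w)}"

definition phi :: "int \<Rightarrow> int \<Rightarrow> int poly \<Rightarrow> int list \<Rightarrow> int list" where
  "phi p q g w = (THE w'. w' \<in> Dom p q \<and> sim p q (strpoly w') (g * strpoly w))"

definition conv2 :: "'a list \<Rightarrow> 'a list \<Rightarrow> ('a option \<times> 'a option) list" where
  "conv2 u v = map (\<lambda>k. (if k < length u then Some (u ! k) else None,
                           if k < length v then Some (v ! k) else None))
                   [0..<max (length u) (length v)]"

definition fa_recognizable :: "'a list set \<Rightarrow> bool" where
  "fa_recognizable L \<longleftrightarrow>
     (\<exists>(Q :: nat set) (\<delta> :: nat \<Rightarrow> 'a \<Rightarrow> nat) s F.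
        finite Q \<and> s \<in> Q \<and> F \<subseteq> Q \<and> (\<forall>st\<in>Q. \<forall>a. \<delta> st a \<in> Q) \<and>
        L = {w. foldl \<delta> s w \<in> F})"

definition fa_recognizable_rel2 :: "('a list \<times> 'a list) set \<Rightarrow> bool" where
  "fa_recognizable_rel2 R \<longleftrightarrow> fa_recognizable {conv2 u v | u v. (u, v) \<in> R}"

end

theory Submission
  imports Defs "HOL-Library.Signed_Division"
begin

text \<open>Read the convolution of \<open>u\<close> and \<open>v\<close> from the least significant digit on, keeping a carry
  polynomial: after absorbing the next digits, subtract the multiple of \<open>t\<close> that clears the
  constant coefficient (possible iff \<open>q\<close> divides it, since \<open>t(0) = -q\<close>) and divide by \<open>x\<close>.
  Then \<open>t\<close> divides \<open>f\<^sub>v - g f\<^sub>u\<close> iff every step succeeds and the final carry is divisible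
  by \<open>t\<close>. Because \<open>1 + \<bar>p\<bar> < \<bar>q\<bar>\<close> the carries stay in a finite box, so this is a finite
  automaton. The same hypothesis makes the balanced base-\<open>q\<close> expansion modulo \<open>x\<^sup>2 \<equiv> q - p x\<close>
  terminate, so every class has a reduced representative and \<open>\<phi>\<^sub>g\<close> is well defined.
  \<open>Dom\<close> is the complement of the projection of the recognizable relation ``equivalent and
  length-lexicographically smaller'', and the graph of \<open>\<phi>\<^sub>g\<close> is the multiplication
  relation restricted to \<open>Dom \<times> Dom\<close>.\<close>

section \<open>Finite automata\<close>

lemma fa_recognizableI:
  fixes Q :: "'s set" and \<delta> :: "'s \<Rightarrow> 'a \<Rightarrow> 's"
  assumes "finite Q" "s \<in> Q" "F \<subseteq> Q" "\<forall>st\<in>Q. \<forall>a. \<delta> st a \<in> Q"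
  shows "fa_recognizable {w. foldl \<delta> s w \<in> F}"
proof -
  obtain f :: "'s \<Rightarrow> nat" where f: "inj_on f Q"
    using \<open>finite Q\<close> finite_imp_inj_to_nat_seg by blast
  define d where "d = (\<lambda>i a. f (\<delta> (the_inv_into Q f i) a))"
  have run: "foldl d (f st) w = f (foldl \<delta> st w) \<and> foldl \<delta> st w \<in> Q" if "st \<in> Q" for st w
    using that by (induction w arbitrary: st) (auto simp: d_def f the_inv_into_f_f assms(4))
  have "{w. foldl \<delta> s w \<in> F} = {w. foldl d (f s) w \<in> f ` F}"
    using run[OF \<open>s \<in> Q\<close>] f \<open>F \<subseteq> Q\<close> by (auto simp: inj_on_image_mem_iff)
  moreover have "\<forall>st\<in>f ` Q. \<forall>a. d st a \<in> f ` Q"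
    using f assms(4) by (auto simp: d_def the_inv_into_f_f)
  ultimately show ?thesis
    unfolding fa_recognizable_def
    by (intro exI[of _ "f ` Q"] exI[of _ d] exI[of _ "f s"] exI[of _ "f ` F"] conjI)
      (use assms in auto)
qed

lemma foldl_closed: "\<forall>st\<in>Q. \<forall>a. \<delta> st a \<in> Q \<Longrightarrow> s \<in> Q \<Longrightarrow> foldl \<delta> s w \<in> Q"
  by (induction w arbitrary: s) auto

lemma fa_recognizableE:
  assumes "fa_recognizable L"
  obtains Q :: "nat set" and \<delta> s F where "finite Q" "s \<in> Q" "F \<subseteq> Q"
    "\<forall>st\<in>Q. \<forall>a. \<delta> st a \<in> Q" "L = {w. foldl \<delta> s w \<in> F}"
  using assms unfolding fa_recognizable_def by blast

lemma fa_recognizable_Int: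
  assumes "fa_recognizable L1" "fa_recognizable L2"
  shows "fa_recognizable (L1 \<inter> L2)"
proof -
  obtain Q1 :: "nat set" and \<delta>1 s1 F1 where A: "finite Q1" "s1 \<in> Q1" "F1 \<subseteq> Q1"
    "\<forall>st\<in>Q1. \<forall>a. \<delta>1 st a \<in> Q1" "L1 = {w. foldl \<delta>1 s1 w \<in> F1}"
    using assms(1) by (rule fa_recognizableE)
  obtain Q2 :: "nat set" and \<delta>2 s2 F2 where B: "finite Q2" "s2 \<in> Q2" "F2 \<subseteq> Q2"
    "\<forall>st\<in>Q2. \<forall>a. \<delta>2 st a \<in> Q2" "L2 = {w. foldl \<delta>2 s2 w \<in> F2}"
    using assms(2) by (rule fa_recognizableE)
  define \<delta> where "\<delta> = (\<lambda>(x, y) a. (\<delta>1 x a, \<delta>2 y a))"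
  have run: "foldl \<delta> (x, y) w = (foldl \<delta>1 x w, foldl \<delta>2 y w)" for x y w
    by (induction w arbitrary: x y) (auto simp: \<delta>_def)
  have "fa_recognizable {w. foldl \<delta> (s1, s2) w \<in> F1 \<times> F2}"
    by (rule fa_recognizableI[where Q = "Q1 \<times> Q2"]) (use A B in \<open>auto simp: \<delta>_def\<close>)
  then show ?thesis by (simp add: run A(5) B(5) Collect_conj_eq)
qed

lemma fa_recognizable_Compl:
  assumes "fa_recognizable L"
  shows "fa_recognizable (- L)"
proof -
  obtain Q :: "nat set" and \<delta> s F where A: "finite Q" "s \<in> Q" "F \<subseteq> Q"
    "\<forall>st\<in>Q. \<forall>a. \<delta> st a \<in> Q" "L = {w. foldl \<delta> s w \<in> F}"
    using assms by (rule fa_recognizableE)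
  have "fa_recognizable {w. foldl \<delta> s w \<in> Q - F}"
    by (rule fa_recognizableI[where Q = Q]) (use A in auto)
  moreover have "{w. foldl \<delta> s w \<in> Q - F} = - L"
    using A(5) foldl_closed[of Q \<delta>, OF A(4) A(2)] by auto
  ultimately show ?thesis by simp
qed

lemma fa_recognizable_lists: "fa_recognizable (lists A)"
proof -
  have run: "foldl (\<lambda>b a. b \<and> a \<in> A) b w \<longleftrightarrow> b \<and> w \<in> lists A" for b w
    by (induction w arbitrary: b) auto
  have "fa_recognizable {w. foldl (\<lambda>b a. b \<and> a \<in> A) True w \<in> {True}}"
    by (rule fa_recognizableI[where Q = UNIV]) auto
  then show ?thesis by (simp add: run)
qed

fun unpad :: "'a option list \<Rightarrow> 'a list" where
  "unpad [] = []"
| "unpad (None # xs) = unpad xs"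
| "unpad (Some a # xs) = a # unpad xs"

lemma fa_recognizable_unpad_vimage:
  fixes f :: "'b \<Rightarrow> 'a option"
  assumes "fa_recognizable D"
  shows "fa_recognizable {c. unpad (map f c) \<in> D}"
proof -
  obtain Q :: "nat set" and \<delta> s F where A: "finite Q" "s \<in> Q" "F \<subseteq> Q"
    "\<forall>st\<in>Q. \<forall>a. \<delta> st a \<in> Q" "D = {w. foldl \<delta> s w \<in> F}"
    using assms by (rule fa_recognizableE)
  define \<delta>' where "\<delta>' = (\<lambda>st l. case f l of None \<Rightarrow> st | Some a \<Rightarrow> \<delta> st a)"
  have run: "foldl \<delta>' st c = foldl \<delta> st (unpad (map f c))" for st c
    by (induction c arbitrary: st) (auto simp: \<delta>'_def split: option.split)
  have "fa_recognizable {c. foldl \<delta>' s c \<in> F}"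
    by (rule fa_recognizableI[where Q = Q]) (use A in \<open>auto simp: \<delta>'_def split: option.split\<close>)
  then show ?thesis by (simp add: run A(5))
qed

lemma fa_recognizable_projection:
  fixes L :: "('b \<times> 'a option) list set"
  assumes "fa_recognizable L"
  shows "fa_recognizable {w. \<exists>c\<in>L. map snd c = map Some w}"
proof -
  obtain Q :: "nat set" and \<delta> s F where A: "finite Q" "s \<in> Q" "F \<subseteq> Q"
    "\<forall>st\<in>Q. \<forall>a. \<delta> st a \<in> Q" "L = {w. foldl \<delta> s w \<in> F}"
    using assms by (rule fa_recognizableE)
  define \<delta>' where "\<delta>' = (\<lambda>S a. {\<delta> st (x, Some a) | st x. st \<in> S})"
  have run: "foldl \<delta>' {s} w = {foldl \<delta> s c | c. map snd c = map Some w}" for w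
  proof (induction w rule: rev_induct)
    case (snoc a w)
    have snoc_iff: "map snd c = map Some (w @ [a]) \<longleftrightarrow>
        (\<exists>c' x. c = c' @ [(x, Some a)] \<and> map snd c' = map Some w)" for c :: "('b \<times> 'a option) list"
      by (cases c rule: rev_cases) auto
    have "foldl \<delta>' {s} (w @ [a]) = {foldl \<delta> s (c' @ [(x, Some a)]) | c' x. map snd c' = map Some w}"
      by (simp add: snoc) (auto simp: \<delta>'_def)
    also have "\<dots> = {foldl \<delta> s c | c. map snd c = map Some (w @ [a])}"
      unfolding snoc_iff by blast
    finally show ?case .
  qed simp
  have "fa_recognizable {w. foldl \<delta>' {s} w \<in> {S \<in> Pow Q. S \<inter> F \<noteq> {}}}"
    by (rule fa_recognizableI[where Q = "Pow Q"]) (use A in \<open>auto simp: \<delta>'_def\<close>)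
  moreover have "{w. foldl \<delta>' {s} w \<in> {S \<in> Pow Q. S \<inter> F \<noteq> {}}} = {w. \<exists>c\<in>L. map snd c = map Some w}"
    unfolding run using A(5) foldl_closed[of Q \<delta>, OF A(4) A(2)] by auto
  ultimately show ?thesis by simp
qed

section \<open>Convolutions\<close>

lemma conv2_Nil_Nil [simp]: "conv2 [] [] = []"
  and conv2_Cons_Cons [simp]: "conv2 (a # u) (b # v) = (Some a, Some b) # conv2 u v"
  and conv2_Nil_Cons [simp]: "conv2 [] (b # v) = (None, Some b) # conv2 [] v"
  and conv2_Cons_Nil [simp]: "conv2 (a # u) [] = (Some a, None) # conv2 u []"
  by (simp_all add: conv2_def map_upt_Suc del: upt_Suc)

lemma conv2_induct [case_names Nil_Nil Cons_Cons Nil_Cons Cons_Nil]: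
  assumes "P [] []" "\<And>a u b v. P u v \<Longrightarrow> P (a # u) (b # v)"
    "\<And>b v. P [] v \<Longrightarrow> P [] (b # v)" "\<And>a u. P u [] \<Longrightarrow> P (a # u) []"
  shows "P u v"
proof (induction u arbitrary: v)
  case Nil
  show ?case by (induction v) (use assms in auto)
next
  case (Cons a u)
  then show ?case by (cases v) (use assms in auto)
qed

lemma unpad_map_fst_conv2 [simp]: "unpad (map fst (conv2 u v)) = u"
  and unpad_map_snd_conv2 [simp]: "unpad (map snd (conv2 u v)) = v"
  by (induction u v rule: conv2_induct) auto

lemma conv2_eq_conv2_iff: "conv2 u v = conv2 u' v' \<longleftrightarrow> u = u' \<and> v = v'"
  by (metis unpad_map_fst_conv2 unpad_map_snd_conv2)

lemma map_snd_conv2_eq_map_Some_iff: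
  "map snd (conv2 u v) = map Some w \<longleftrightarrow> v = w \<and> length u \<le> length v"
  by (induction u v arbitrary: w rule: conv2_induct) (auto simp: Cons_eq_map_conv)

text \<open>The flags record that the first, resp. second, track has already run into padding;
  \<open>None\<close> is the rejecting sink.\<close>

definition conv_check :: "(bool \<times> bool) option \<Rightarrow> 'a option \<times> 'a option \<Rightarrow> (bool \<times> bool) option" where
  "conv_check st l = (case (st, l) of
     (Some (e1, e2), (x, y)) \<Rightarrow>
       if (x = None \<and> y = None) \<or> (e1 \<and> x \<noteq> None) \<or> (e2 \<and> y \<noteq> None) then None
       else Some (e1 \<or> x = None, e2 \<or> y = None)
   | (None, _) \<Rightarrow> None)"

lemma conv_check_Some:
  "conv_check (Some (e1, e2)) (x, y) =
    (if (x = None \<and> y = None) \<or> (e1 \<and> x \<noteq> None) \<or> (e2 \<and> y \<noteq> None) then None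
     else Some (e1 \<or> x = None, e2 \<or> y = None))"
  by (simp add: conv_check_def)

lemma foldl_conv_check_None [simp]: "foldl conv_check None c = None"
  by (induction c) (auto simp: conv_check_def)

lemma foldl_conv_check_conv2:
  "(e1 \<longrightarrow> u = []) \<Longrightarrow> (e2 \<longrightarrow> v = []) \<Longrightarrow> foldl conv_check (Some (e1, e2)) (conv2 u v) \<noteq> None"
  by (induction u v arbitrary: e1 e2 rule: conv2_induct) (auto simp: conv_check_Some)

lemma conv2_unpad_if_foldl_conv_check:
  "foldl conv_check (Some (e1, e2)) c \<noteq> None \<Longrightarrow>
    c = conv2 (unpad (map fst c)) (unpad (map snd c)) \<and>
    (e1 \<longrightarrow> unpad (map fst c) = []) \<and> (e2 \<longrightarrow> unpad (map snd c) = [])"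
proof (induction c arbitrary: e1 e2)
  case (Cons l c)
  obtain x y where l: "l = (x, y)" by force
  have ok: "\<not> ((x = None \<and> y = None) \<or> (e1 \<and> x \<noteq> None) \<or> (e2 \<and> y \<noteq> None))"
    using Cons.prems by (auto simp: l conv_check_Some split: if_splits)
  then have "conv_check (Some (e1, e2)) l = Some (e1 \<or> x = None, e2 \<or> y = None)"
    by (simp add: l conv_check_Some)
  then have "foldl conv_check (Some (e1 \<or> x = None, e2 \<or> y = None)) c \<noteq> None"
    using Cons.prems by simp
  then show ?case
    using Cons.IH ok by (cases x; cases y) (auto simp: l)
qed simp

lemma fa_recognizable_convolutions: "fa_recognizable {conv2 u v | u v. True}"
proof -
  have "fa_recognizable {c. foldl conv_check (Some (False, False)) c \<in> UNIV - {None}}"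
    by (rule fa_recognizableI[where Q = UNIV]) auto
  moreover have "{c. foldl conv_check (Some (False, False)) c \<in> UNIV - {None}} = {conv2 u v | u v. True}"
    using foldl_conv_check_conv2[of False _ False] conv2_unpad_if_foldl_conv_check[of False False]
    by blast
  ultimately show ?thesis by metis
qed

lemma fa_recognizable_rel2I:
  assumes "fa_recognizable L" "\<And>u v. conv2 u v \<in> L \<longleftrightarrow> (u, v) \<in> R"
  shows "fa_recognizable_rel2 R"
proof -
  have "{conv2 u v | u v. (u, v) \<in> R} = L \<inter> {conv2 u v | u v. True}"
    using assms(2) by blast
  then show ?thesis
    unfolding fa_recognizable_rel2_def
    using fa_recognizable_Int[OF assms(1) fa_recognizable_convolutions] by simp
qed

lemma fa_recognizable_rel2_Int:
  assumes "fa_recognizable_rel2 R" "fa_recognizable_rel2 S"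
  shows "fa_recognizable_rel2 (R \<inter> S)"
  using fa_recognizable_Int[OF assms[unfolded fa_recognizable_rel2_def]]
  by (rule fa_recognizable_rel2I) (auto simp: conv2_eq_conv2_iff)

lemma fa_recognizable_rel2_Times:
  assumes "fa_recognizable A" "fa_recognizable B"
  shows "fa_recognizable_rel2 (A \<times> B)"
  using fa_recognizable_Int[OF fa_recognizable_unpad_vimage[OF assms(1), of fst]
      fa_recognizable_unpad_vimage[OF assms(2), of snd]]
  by (rule fa_recognizable_rel2I) simp

lemma fa_recognizable_Range:
  assumes "fa_recognizable_rel2 R" "\<And>u v. (u, v) \<in> R \<Longrightarrow> length u \<le> length v"
  shows "fa_recognizable (Range R)"
proof -
  have "Range R = {w. \<exists>c\<in>{conv2 u v | u v. (u, v) \<in> R}. map snd c = map Some w}"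
    using assms(2) by (fastforce simp: map_snd_conv2_eq_map_Some_iff)
  then show ?thesis
    using fa_recognizable_projection[OF assms(1)[unfolded fa_recognizable_rel2_def]] by simp
qed

section \<open>Length-lexicographic order\<close>

lemma llex_less_iff_lenlex: "llex_less u w \<longleftrightarrow> (u, w) \<in> lenlex {(a, b). a < b}"
  by (auto simp: llex_less_def lenlex_conv lexord_lex lexord_take_index_conv)

lemma lenlex_Int_Times:
  "set u \<subseteq> A \<Longrightarrow> set w \<subseteq> A \<Longrightarrow> (u, w) \<in> lenlex r \<longleftrightarrow> (u, w) \<in> lenlex (r \<inter> A \<times> A)"
  by (auto simp: lenlex_conv lex_conv) blast

fun first_less :: "'a::linorder list \<Rightarrow> 'a list \<Rightarrow> bool option" where
  "first_less (a # u) (b # w) = (if a = b then first_less u w else Some (a < b))"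
| "first_less _ _ = None"

lemma lex_less_iff_first_less:
  "length u = length w \<Longrightarrow> (u, w) \<in> lex {(a, b). a < b} \<longleftrightarrow> first_less u w = Some True"
  by (induction u w rule: first_less.induct) auto

text \<open>The first component is the comparison at the first position where both tracks carry
  different letters, once reached; the flags are as in \<open>conv_check\<close>.\<close>

definition llex_check ::
    "bool option \<times> bool \<times> bool \<Rightarrow> 'a::linorder option \<times> 'a option \<Rightarrow> bool option \<times> bool \<times> bool" where
  "llex_check = (\<lambda>(d, e1, e2) (x, y).
     (if d = None \<and> x \<noteq> None \<and> y \<noteq> None \<and> x \<noteq> y then Some (the x < the y) else d,
      e1 \<or> x = None, e2 \<or> y = None))"

lemma foldl_llex_check_conv2:
  "foldl llex_check (d, e1, e2) (conv2 u w) =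
    (if d = None then first_less u w else d, e1 \<or> length u < length w, e2 \<or> length w < length u)"
  by (induction u w arbitrary: d e1 e2 rule: conv2_induct) (auto simp: llex_check_def)

lemma fa_recognizable_rel2_llex_less: "fa_recognizable_rel2 {(u, w). llex_less u w}"
proof (rule fa_recognizable_rel2I)
  let ?F = "{(d, e1, e2). (e1 \<and> \<not> e2) \<or> (\<not> e1 \<and> \<not> e2 \<and> d = Some True)}"
  show "fa_recognizable {c. foldl llex_check (None, False, False) c \<in> ?F}"
    by (rule fa_recognizableI[where Q = UNIV]) auto
  show "conv2 u w \<in> {c. foldl llex_check (None, False, False) c \<in> ?F} \<longleftrightarrow> (u, w) \<in> {(u, w). llex_less u w}"
    for u w :: "int list"
    by (auto simp: foldl_llex_check_conv2 llex_less_iff_lenlex lenlex_conv lex_less_iff_first_less)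
qed

section \<open>Multiplication by \<open>g\<close> modulo \<open>t\<close>\<close>

lemma dvd_pCons_0_iff:
  fixes t :: "'a::idom poly"
  assumes "coeff t 0 \<noteq> 0"
  shows "t dvd pCons 0 Z \<longleftrightarrow> t dvd Z"
proof
  assume "t dvd pCons 0 Z"
  then obtain D where D: "pCons 0 Z = t * D" by (elim dvdE)
  obtain d D' where D': "D = pCons d D'" by (cases D)
  have "coeff t 0 * d = 0"
    using arg_cong[OF D, of "\<lambda>P. coeff P 0"] by (auto simp: coeff_mult_0 D')
  then have "d = 0" using assms by simp
  then have "Z = t * D'" using D by (simp add: D')
  then show "t dvd Z" by simp
next
  assume "t dvd Z"
  then show "t dvd pCons 0 Z"
    using dvd_mult[of t Z "[:0, 1:]"] by simp
qed

lemma pCons_0_poly_shift_1: "coeff P 0 = 0 \<Longrightarrow> pCons 0 (poly_shift 1 P) = P"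
  by (rule poly_eqI) (simp add: coeff_pCons coeff_poly_shift split: nat.split)

lemma coeff_tpoly: "coeff (tpoly p q) i = (if i = 0 then - q else if i = 1 then p else if i = 2 then 1 else 0)"
  by (simp add: tpoly_def coeff_pCons split: nat.split)

definition carry_step :: "int \<Rightarrow> int \<Rightarrow> int poly \<Rightarrow> int poly \<Rightarrow> int \<Rightarrow> int \<Rightarrow> int poly option" where
  "carry_step p q g R a b =
     (let S = R + [:b:] - smult a g
      in if q dvd coeff S 0 then Some (poly_shift 1 (S + smult (coeff S 0 div q) (tpoly p q))) else None)"

lemma carry_step_dvd_iff:
  assumes "q \<noteq> 0"
  shows "tpoly p q dvd R + pCons b V - g * pCons a U \<longleftrightarrow>
    (\<exists>R'. carry_step p q g R a b = Some R' \<and> tpoly p q dvd R' + V - g * U)"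
proof -
  define S where "S = R + [:b:] - smult a g"
  define Z where "Z = V - g * U"
  have split: "R + pCons b V - g * pCons a U = S + pCons 0 Z"
    by (rule poly_eqI) (simp add: S_def Z_def coeff_pCons split: nat.split)
  show ?thesis
  proof (cases "q dvd coeff S 0")
    case False
    have "\<not> tpoly p q dvd S + pCons 0 Z"
    proof
      assume "tpoly p q dvd S + pCons 0 Z"
      then obtain D where D: "S + pCons 0 Z = tpoly p q * D" by (elim dvdE)
      have "coeff S 0 = q * - coeff D 0"
        using arg_cong[OF D, of "\<lambda>P. coeff P 0"] by (simp add: coeff_mult_0 coeff_tpoly)
      then show False using False by simp
    qed
    moreover have "carry_step p q g R a b = None"
      using False by (simp add: carry_step_def S_def Let_def)
    ultimately show ?thesis unfolding split by simp
  next
    case True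
    define k where "k = coeff S 0 div q"
    define R' where "R' = poly_shift 1 (S + smult k (tpoly p q))"
    have "pCons 0 R' = S + smult k (tpoly p q)"
      unfolding R'_def using True by (intro pCons_0_poly_shift_1) (simp add: k_def coeff_tpoly)
    then have "pCons 0 (R' + Z) = (S + pCons 0 Z) + smult k (tpoly p q)"
      by (metis add.assoc add.commute add_pCons add_0)
    then have "tpoly p q dvd S + pCons 0 Z \<longleftrightarrow> tpoly p q dvd pCons 0 (R' + Z)"
      by (simp add: dvd_add_left_iff dvd_smult)
    also have "\<dots> \<longleftrightarrow> tpoly p q dvd R' + Z"
      using assms by (simp add: dvd_pCons_0_iff coeff_tpoly)
    finally have dvd_iff: "tpoly p q dvd S + pCons 0 Z \<longleftrightarrow> tpoly p q dvd R' + Z" .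
    moreover have "carry_step p q g R a b = Some R'"
      using True by (simp add: carry_step_def R'_def k_def S_def Let_def)
    ultimately show ?thesis unfolding split dvd_iff by (simp add: Z_def algebra_simps)
  qed
qed

text \<open>The coefficient bounds are chosen so that \<open>carry_step\<close> preserves them: the multiple
  of \<open>t\<close> it subtracts is at most \<open>carry_bound\<close> because \<open>2 + \<bar>p\<bar> \<le> \<bar>q\<bar>\<close>, and the bound at \<open>i\<close>
  is the bound at \<open>i + 1\<close> plus the contributions of \<open>g\<^sub>i\<^sub>+\<^sub>1\<close> and \<open>t\<^sub>i\<^sub>+\<^sub>1\<close>.\<close>

definition tail_weight :: "int \<Rightarrow> int poly \<Rightarrow> nat \<Rightarrow> int" where
  "tail_weight q g i = (\<bar>q\<bar> - 1) * (\<Sum>j\<in>{Suc i..degree g}. \<bar>coeff g j\<bar>)"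

definition carry_bound :: "int \<Rightarrow> int poly \<Rightarrow> int" where
  "carry_bound q g = tail_weight q g 0 + (\<bar>q\<bar> - 1) * (1 + \<bar>coeff g 0\<bar>)"

definition rem_bound :: "int \<Rightarrow> int \<Rightarrow> int poly \<Rightarrow> nat \<Rightarrow> int" where
  "rem_bound p q g i = tail_weight q g i +
     (if i = 0 then (1 + \<bar>p\<bar>) * carry_bound q g else if i = 1 then carry_bound q g else 0)"

definition carry_box :: "int \<Rightarrow> int \<Rightarrow> int poly \<Rightarrow> int poly set" where
  "carry_box p q g = {R. \<forall>i. \<bar>coeff R i\<bar> \<le> rem_bound p q g i}"

lemma tail_weight_Suc: "tail_weight q g i = tail_weight q g (Suc i) + (\<bar>q\<bar> - 1) * \<bar>coeff g (Suc i)\<bar>"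
proof (cases "Suc i \<le> degree g")
  case True
  then show ?thesis by (simp add: tail_weight_def sum.atLeast_Suc_atMost algebra_simps)
next
  case False
  then show ?thesis by (simp add: tail_weight_def coeff_eq_0)
qed

lemma tail_weight_nonneg: "q \<noteq> 0 \<Longrightarrow> tail_weight q g i \<ge> 0"
  by (simp add: tail_weight_def sum_nonneg)

lemma tail_weight_antimono: "q \<noteq> 0 \<Longrightarrow> i \<le> j \<Longrightarrow> tail_weight q g j \<le> tail_weight q g i"
  by (simp add: tail_weight_def mult_left_mono sum_mono2)

lemma carry_bound_nonneg: "q \<noteq> 0 \<Longrightarrow> carry_bound q g \<ge> 0"
  by (simp add: carry_bound_def tail_weight_nonneg)

lemma rem_bound_nonneg: "q \<noteq> 0 \<Longrightarrow> rem_bound p q g i \<ge> 0"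
  by (simp add: rem_bound_def tail_weight_nonneg carry_bound_nonneg)

lemma rem_bound_le_0:
  assumes "q \<noteq> 0"
  shows "rem_bound p q g i \<le> rem_bound p q g 0"
proof -
  have "0 \<le> carry_bound q g"
    using assms by (rule carry_bound_nonneg)
  then have "carry_bound q g \<le> (1 + \<bar>p\<bar>) * carry_bound q g" "0 \<le> (1 + \<bar>p\<bar>) * carry_bound q g"
    using mult_right_mono[of 1 "1 + \<bar>p\<bar>" "carry_bound q g"] by simp_all
  then show ?thesis
    using tail_weight_antimono[OF assms, of 0 i g] by (auto simp: rem_bound_def)
qed

lemma rem_bound_eq_0: "degree g + 2 \<le> i \<Longrightarrow> rem_bound p q g i = 0"
  by (simp add: rem_bound_def tail_weight_def)

lemma rem_bound_Suc:
  "rem_bound p q g (Suc i) + (\<bar>q\<bar> - 1) * \<bar>coeff g (Suc i)\<bar> + carry_bound q g * \<bar>coeff (tpoly p q) (Suc i)\<bar>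
    = rem_bound p q g i"
  by (simp add: rem_bound_def coeff_tpoly tail_weight_Suc[of q g i] algebra_simps)

lemma carry_step_in_carry_box:
  assumes pq: "1 + \<bar>p\<bar> < \<bar>q\<bar>" and R: "R \<in> carry_box p q g"
    and a: "\<bar>a\<bar> \<le> \<bar>q\<bar> - 1" and b: "\<bar>b\<bar> \<le> \<bar>q\<bar> - 1"
    and step: "carry_step p q g R a b = Some R'"
  shows "R' \<in> carry_box p q g"
proof -
  define S where "S = R + [:b:] - smult a g"
  define k where "k = coeff S 0 div q"
  define H where "H = carry_bound q g"
  have q: "q \<noteq> 0" using pq by auto
  have RB: "\<bar>coeff R i\<bar> \<le> rem_bound p q g i" for i
    using R by (simp add: carry_box_def)
  have "q dvd coeff S 0" and R': "R' = poly_shift 1 (S + smult k (tpoly p q))"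
    using step by (simp_all add: carry_step_def S_def k_def Let_def split: if_splits)
  then have "\<bar>k\<bar> * \<bar>q\<bar> = \<bar>coeff S 0\<bar>"
    by (simp add: k_def abs_mult[symmetric])
  also have "\<dots> \<le> \<bar>coeff R 0\<bar> + \<bar>b\<bar> + \<bar>a\<bar> * \<bar>coeff g 0\<bar>"
    by (simp add: S_def abs_mult[symmetric] abs_triangle_ineq4 order_trans[OF abs_triangle_ineq4])
  also have "\<dots> \<le> rem_bound p q g 0 + (\<bar>q\<bar> - 1) + (\<bar>q\<bar> - 1) * \<bar>coeff g 0\<bar>"
    using RB[of 0] a b by (intro add_mono mult_right_mono) auto
  also have "\<dots> = (2 + \<bar>p\<bar>) * H"
    by (simp add: rem_bound_def H_def carry_bound_def algebra_simps)
  also have "\<dots> \<le> H * \<bar>q\<bar>"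
    using pq mult_right_mono[of "2 + \<bar>p\<bar>" "\<bar>q\<bar>" H] carry_bound_nonneg[OF q, of g]
    by (simp add: H_def mult.commute)
  finally have k: "\<bar>k\<bar> \<le> H"
    using q by simp
  have "\<bar>coeff R' i\<bar> \<le> rem_bound p q g i" for i
  proof -
    have "coeff R' i = coeff R (Suc i) - a * coeff g (Suc i) + k * coeff (tpoly p q) (Suc i)"
      by (simp add: R' S_def coeff_poly_shift)
    also have "\<bar>\<dots>\<bar> \<le> rem_bound p q g (Suc i) + (\<bar>q\<bar> - 1) * \<bar>coeff g (Suc i)\<bar> + H * \<bar>coeff (tpoly p q) (Suc i)\<bar>"
      using RB[of "Suc i"] mult_right_mono[OF a, of "\<bar>coeff g (Suc i)\<bar>"]
        mult_right_mono[OF k, of "\<bar>coeff (tpoly p q) (Suc i)\<bar>"]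
      unfolding abs_mult[symmetric] by linarith
    also have "\<dots> = rem_bound p q g i"
      by (simp add: H_def rem_bound_Suc)
    finally show ?thesis .
  qed
  then show ?thesis by (simp add: carry_box_def)
qed

lemma finite_carry_box:
  assumes "q \<noteq> 0"
  shows "finite (carry_box p q g)"
proof -
  define M where "M = rem_bound p q g 0"
  have "carry_box p q g \<subseteq> Poly ` {xs. set xs \<subseteq> {-M..M} \<and> length xs \<le> degree g + 2}"
  proof
    fix R assume "R \<in> carry_box p q g"
    then have RB: "\<bar>coeff R i\<bar> \<le> rem_bound p q g i" for i
      by (simp add: carry_box_def)
    have "coeff R i = 0" if "degree g + 1 < i" for i
      using RB[of i] rem_bound_eq_0[of g i p q] that by simp
    then have "degree R \<le> degree g + 1"
      by (simp add: degree_le)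
    then have "length (coeffs R) \<le> degree g + 2"
      by (cases "R = 0") (simp_all add: length_coeffs)
    moreover have "\<bar>coeff R i\<bar> \<le> M" for i
      using RB[of i] rem_bound_le_0[OF assms, of p g i] by (simp add: M_def)
    then have "set (coeffs R) \<subseteq> {-M..M}"
      by (auto simp: coeffs_def abs_le_iff) (metis minus_le_iff)+
    ultimately show "R \<in> Poly ` {xs. set xs \<subseteq> {-M..M} \<and> length xs \<le> degree g + 2}"
      by (intro image_eqI[of _ _ "coeffs R"]) simp_all
  qed
  moreover have "finite {xs. set xs \<subseteq> {-M..M} \<and> length xs \<le> degree g + 2}"
    by (rule finite_lists_length_le) simp
  ultimately show ?thesis by (meson finite_surj)
qed

definition digit_val :: "int option \<Rightarrow> int" where
  "digit_val x = (case x of None \<Rightarrow> 0 | Some a \<Rightarrow> a)"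

definition carry_check ::
    "int \<Rightarrow> int \<Rightarrow> int poly \<Rightarrow> int poly option \<Rightarrow> int option \<times> int option \<Rightarrow> int poly option" where
  "carry_check p q g st l = (case st of None \<Rightarrow> None | Some R \<Rightarrow>
     if set_option (fst l) \<subseteq> Sigma q \<and> set_option (snd l) \<subseteq> Sigma q
     then carry_step p q g R (digit_val (fst l)) (digit_val (snd l)) else None)"

lemma carry_check_Some:
  "carry_check p q g (Some R) l =
    (if set_option (fst l) \<subseteq> Sigma q \<and> set_option (snd l) \<subseteq> Sigma q
     then carry_step p q g R (digit_val (fst l)) (digit_val (snd l)) else None)"
  by (simp add: carry_check_def)

lemma foldl_carry_check_None [simp]: "foldl (carry_check p q g) None c = None"
  by (induction c) (simp_all add: carry_check_def)

lemma foldl_carry_check: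
  assumes "q \<noteq> 0"
  shows "(\<exists>R'. foldl (carry_check p q g) (Some R) c = Some R' \<and> tpoly p q dvd R') \<longleftrightarrow>
    (\<forall>l\<in>set c. set_option (fst l) \<subseteq> Sigma q \<and> set_option (snd l) \<subseteq> Sigma q) \<and>
    tpoly p q dvd R + Poly (map (digit_val \<circ> snd) c) - g * Poly (map (digit_val \<circ> fst) c)"
    (is "?accepts R c \<longleftrightarrow> ?digits c \<and> ?dvd R c")
proof (induction c arbitrary: R)
  case (Cons l c)
  let ?a = "digit_val (fst l)" and ?b = "digit_val (snd l)"
  show ?case
  proof (cases "set_option (fst l) \<subseteq> Sigma q \<and> set_option (snd l) \<subseteq> Sigma q")
    case True
    then have "?accepts R (l # c) \<longleftrightarrow> (\<exists>R1. carry_step p q g R ?a ?b = Some R1 \<and> ?accepts R1 c)"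
      by (cases "carry_step p q g R ?a ?b") (simp_all add: carry_check_Some)
    also have "\<dots> \<longleftrightarrow> ?digits c \<and> (\<exists>R1. carry_step p q g R ?a ?b = Some R1 \<and> ?dvd R1 c)"
      using Cons.IH by blast
    also have "\<dots> \<longleftrightarrow> ?digits c \<and> ?dvd R (l # c)"
      using carry_step_dvd_iff[OF assms] by simp
    finally show ?thesis using True by simp
  next
    case False
    then have "carry_check p q g (Some R) l = None"
      by (simp only: carry_check_Some if_False)
    then show ?thesis using False by (simp; blast)
  qed
qed simp

lemma digits_conv2_iff:
  "(\<forall>l\<in>set (conv2 u v). set_option (fst l) \<subseteq> A \<and> set_option (snd l) \<subseteq> A) \<longleftrightarrow> u \<in> lists A \<and> v \<in> lists A"
  by (induction u v rule: conv2_induct) auto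

lemma Poly_digit_val_conv2:
  "Poly (map (digit_val \<circ> fst) (conv2 u v)) = Poly u"
  "Poly (map (digit_val \<circ> snd) (conv2 u v)) = Poly v"
  by (induction u v rule: conv2_induct) (simp_all add: digit_val_def)

lemma fa_recognizable_rel2_sim_mult:
  assumes pq: "1 + \<bar>p\<bar> < \<bar>q\<bar>"
  shows "fa_recognizable_rel2
    {(u, v). u \<in> lists (Sigma q) \<and> v \<in> lists (Sigma q) \<and> sim p q (strpoly v) (g * strpoly u)}"
proof (rule fa_recognizable_rel2I)
  have q: "q \<noteq> 0" using pq by auto
  let ?Q = "insert None (Some ` carry_box p q g)"
  let ?F = "Some ` {R \<in> carry_box p q g. tpoly p q dvd R}"
  have digit_bound: "\<bar>digit_val x\<bar> \<le> \<bar>q\<bar> - 1" if "set_option x \<subseteq> Sigma q" for x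
    using that q by (cases x) (auto simp: digit_val_def Sigma_def)
  have closed: "\<forall>st\<in>?Q. \<forall>l. carry_check p q g st l \<in> ?Q"
  proof (intro ballI allI)
    fix st l
    assume st: "st \<in> ?Q"
    show "carry_check p q g st l \<in> ?Q"
    proof (cases "carry_check p q g st l")
      case (Some R')
      then obtain R where "st = Some R" "R \<in> carry_box p q g"
        using st by (auto simp: carry_check_def)
      with Some have "set_option (fst l) \<subseteq> Sigma q" "set_option (snd l) \<subseteq> Sigma q"
        "carry_step p q g R (digit_val (fst l)) (digit_val (snd l)) = Some R'"
        by (simp_all add: carry_check_Some split: if_splits)
      with \<open>R \<in> carry_box p q g\<close> show ?thesis
        using Some carry_step_in_carry_box[OF pq _ digit_bound digit_bound] by simp
    qed simp
  qed
  have "0 \<in> carry_box p q g"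
    using rem_bound_nonneg[OF q] by (simp add: carry_box_def)
  then show "fa_recognizable {c. foldl (carry_check p q g) (Some 0) c \<in> ?F}"
    using closed finite_carry_box[OF q] by (intro fa_recognizableI[where Q = ?Q]) auto
  show "conv2 u v \<in> {c. foldl (carry_check p q g) (Some 0) c \<in> ?F} \<longleftrightarrow>
    (u, v) \<in> {(u, v). u \<in> lists (Sigma q) \<and> v \<in> lists (Sigma q) \<and> sim p q (strpoly v) (g * strpoly u)}"
    for u v
  proof -
    have "foldl (carry_check p q g) (Some 0) (conv2 u v) \<in> ?Q"
      using closed \<open>0 \<in> carry_box p q g\<close> by (intro foldl_closed) auto
    then have "foldl (carry_check p q g) (Some 0) (conv2 u v) \<in> ?F \<longleftrightarrow>
        (\<exists>R'. foldl (carry_check p q g) (Some 0) (conv2 u v) = Some R' \<and> tpoly p q dvd R')"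
      by auto
    then show ?thesis
      by (simp add: foldl_carry_check[OF q] digits_conv2_iff Poly_digit_val_conv2 sim_def strpoly_def)
  qed
qed

section \<open>Reduced representatives\<close>

lemma sim_refl [simp]: "sim p q F F"
  by (simp add: sim_def)

lemma sim_sym: "sim p q F G \<Longrightarrow> sim p q G F"
  unfolding sim_def by (metis dvd_minus_iff minus_diff_eq)

lemma sim_commute: "sim p q F G \<longleftrightarrow> sim p q G F"
  using sim_sym by blast

lemma sim_trans: "sim p q F G \<Longrightarrow> sim p q G H \<Longrightarrow> sim p q F H"
  unfolding sim_def by (metis diff_add_cancel add_diff_eq dvd_add)

lemma sim_pCons: "sim p q F G \<Longrightarrow> sim p q (pCons c F) (pCons c G)"
  unfolding sim_def using dvd_mult[of "tpoly p q" "F - G" "[:0, 1:]"] by simp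

lemma sim_pCons_linear: "sim p q (pCons c [:a, b:]) [:c + b * q, a - b * p:]"
proof -
  have "pCons c [:a, b:] - [:c + b * q, a - b * p:] = smult b (tpoly p q)"
    by (simp add: tpoly_def algebra_simps)
  then show ?thesis by (simp add: sim_def dvd_smult)
qed

lemma sim_linear: "\<exists>a b. sim p q G [:a, b:]"
proof (induction G rule: pCons_induct)
  case 0
  have "sim p q 0 [:0, 0:]" by simp
  then show ?case by blast
next
  case (pCons c G)
  then obtain a b where "sim p q G [:a, b:]" by blast
  then have "sim p q (pCons c G) [:c + b * q, a - b * p:]"
    using sim_pCons sim_pCons_linear sim_trans by blast
  then show ?case by blast
qed

lemma abs_mult_sdiv_le: "\<bar>q\<bar> * \<bar>a sdiv q\<bar> \<le> \<bar>a\<bar>" for a q :: int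
proof -
  have "\<bar>a sdiv q\<bar> = \<bar>a\<bar> div \<bar>q\<bar>"
    by (cases "a = 0 \<or> q = 0") (auto simp: signed_divide_int_def abs_mult pos_imp_zdiv_nonneg_iff)
  then have "\<bar>q\<bar> * \<bar>a sdiv q\<bar> = \<bar>q\<bar> * (\<bar>a\<bar> div \<bar>q\<bar>)"
    by simp
  also have "\<dots> = \<bar>a\<bar> - \<bar>a\<bar> mod \<bar>q\<bar>"
    by (simp add: minus_mod_eq_mult_div)
  also have "\<dots> \<le> \<bar>a\<bar>"
    by (cases "q = 0") simp_all
  finally show ?thesis .
qed

lemma reduced_rep_linear:
  assumes pq: "1 + \<bar>p\<bar> < \<bar>q\<bar>"
  shows "\<exists>w\<in>lists (Sigma q). sim p q (Poly w) [:a, b:]"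
proof (induction "nat (2 * (\<bar>a\<bar> + 2 * \<bar>b\<bar>)) + (if b = 0 then 1 else 0)" arbitrary: a b rule: less_induct)
  case less
  show ?case
  proof (cases "a = 0 \<and> b = 0")
    case True
    then show ?thesis by (intro bexI[of _ "[]"]) simp_all
  next
    case nonzero: False
    define m where "m = a sdiv q"
    define d where "d = a smod q"
    have a: "a = d + q * m"
      by (simp add: d_def m_def smod_mult_sdiv_eq)
    have d: "d \<in> Sigma q"
      using pq smod_int_range[of q a] by (auto simp: d_def Sigma_def)
    have "(\<bar>p\<bar> + 2) * \<bar>m\<bar> \<le> \<bar>q\<bar> * \<bar>m\<bar>"
      using pq by (intro mult_right_mono) auto
    then have "\<bar>b + p * m\<bar> + 2 * \<bar>m\<bar> \<le> \<bar>a\<bar> + \<bar>b\<bar>"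
      using abs_mult_sdiv_le[of q a] abs_triangle_ineq[of b "p * m"]
      by (simp add: m_def abs_mult algebra_simps)
    then have "nat (2 * (\<bar>b + p * m\<bar> + 2 * \<bar>m\<bar>)) + (if m = 0 then 1 else 0)
        < nat (2 * (\<bar>a\<bar> + 2 * \<bar>b\<bar>)) + (if b = 0 then 1 else 0)"
      using nonzero by (cases "b = 0"; cases "m = 0") (auto simp: abs_if)
    then obtain w where w: "w \<in> lists (Sigma q)" "sim p q (Poly w) [:b + p * m, m:]"
      using less by blast
    have "sim p q (Poly (d # w)) [:d + m * q, b + p * m - m * p:]"
      using sim_trans[OF sim_pCons[OF w(2)] sim_pCons_linear] by simp
    then have "sim p q (Poly (d # w)) [:a, b:]"
      by (simp add: a algebra_simps)
    then show ?thesis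
      using w(1) d by (intro bexI[of _ "d # w"]) simp_all
  qed
qed

lemma reduced_rep:
  assumes "1 + \<bar>p\<bar> < \<bar>q\<bar>"
  shows "\<exists>w\<in>lists (Sigma q). sim p q (strpoly w) G"
proof -
  obtain a b where "sim p q G [:a, b:]"
    using sim_linear by blast
  moreover obtain w where "w \<in> lists (Sigma q)" "sim p q (Poly w) [:a, b:]"
    using reduced_rep_linear[OF assms] by blast
  ultimately show ?thesis
    unfolding strpoly_def by (meson sim_sym sim_trans)
qed

lemma wf_lenlex_Sigma: "wf (lenlex ({(a, b). a < b} \<inter> Sigma q \<times> Sigma q))"
proof (intro wf_lenlex wf_subset[OF wf_int_ge_less_than])
  show "{(a, b). a < b} \<inter> Sigma q \<times> Sigma q \<subseteq> int_ge_less_than (- (\<bar>q\<bar> - 1))"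
    by (auto simp: int_ge_less_than_def Sigma_def)
qed

lemma Dom_exists:
  assumes "1 + \<bar>p\<bar> < \<bar>q\<bar>"
  shows "\<exists>w. w \<in> Dom p q \<and> sim p q (strpoly w) G"
proof -
  let ?C = "{w \<in> lists (Sigma q). sim p q (strpoly w) G}"
  obtain w0 where "w0 \<in> ?C"
    using reduced_rep[OF assms] by blast
  then have "\<exists>z\<in>?C. \<forall>u. (u, z) \<in> lenlex ({(a, b). a < b} \<inter> Sigma q \<times> Sigma q) \<longrightarrow> u \<notin> ?C"
    by (rule wf_eq_minimal[THEN iffD1, rule_format, OF wf_lenlex_Sigma])
  then obtain z where z: "z \<in> ?C"
    and min: "\<forall>u. (u, z) \<in> lenlex ({(a, b). a < b} \<inter> Sigma q \<times> Sigma q) \<longrightarrow> u \<notin> ?C"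
    by blast
  have "z \<in> Dom p q"
    unfolding Dom_def
  proof (intro CollectI conjI notI)
    show "set z \<subseteq> Sigma q" using z by auto
  next
    assume "\<exists>u. set u \<subseteq> Sigma q \<and> llex_less u z \<and> str_equiv p q u z"
    then obtain u where u: "set u \<subseteq> Sigma q" "llex_less u z" "str_equiv p q u z"
      by blast
    have "u \<in> ?C"
      using u z sim_trans unfolding str_equiv_def by auto
    moreover have "(u, z) \<in> lenlex ({(a, b). a < b} \<inter> Sigma q \<times> Sigma q)"
      using u z lenlex_Int_Times[of u "Sigma q" z "{(a, b). a < b}"]
      by (simp add: llex_less_iff_lenlex lists_eq_set)
    ultimately show False
      using min by blast
  qed
  then show ?thesis using z by blast
qed

lemma Dom_unique:
  assumes "w1 \<in> Dom p q" "w2 \<in> Dom p q" "sim p q (strpoly w1) G" "sim p q (strpoly w2) G"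
  shows "w1 = w2"
proof (rule ccontr)
  assume "w1 \<noteq> w2"
  moreover have "total (lenlex {(a, b). a < (b::int)})"
    by (rule total_lenlex) (auto simp: total_on_def)
  ultimately have "llex_less w1 w2 \<or> llex_less w2 w1"
    by (auto simp: llex_less_iff_lenlex total_on_def)
  moreover have "str_equiv p q w1 w2" "str_equiv p q w2 w1"
    using assms(3,4) sim_sym sim_trans unfolding str_equiv_def by blast+
  moreover have "set w1 \<subseteq> Sigma q" "set w2 \<subseteq> Sigma q"
    using assms(1,2) by (simp_all add: Dom_def)
  ultimately show False
    using assms(1,2) unfolding Dom_def by blast
qed

lemma phi_eqI:
  assumes "w' \<in> Dom p q" "sim p q (strpoly w') (g * strpoly w)"
  shows "phi p q g w = w'"
  unfolding phi_def
proof (rule the_equality)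
  show "w' \<in> Dom p q \<and> sim p q (strpoly w') (g * strpoly w)"
    using assms ..
  show "w'' = w'" if "w'' \<in> Dom p q \<and> sim p q (strpoly w'') (g * strpoly w)" for w''
    using that assms by (auto intro: Dom_unique)
qed

lemma phi_in_Dom_sim:
  assumes "1 + \<bar>p\<bar> < \<bar>q\<bar>"
  shows "phi p q g w \<in> Dom p q" "sim p q (strpoly (phi p q g w)) (g * strpoly w)"
proof -
  obtain w' where "w' \<in> Dom p q" "sim p q (strpoly w') (g * strpoly w)"
    using Dom_exists[OF assms] by blast
  with phi_eqI show "phi p q g w \<in> Dom p q" "sim p q (strpoly (phi p q g w)) (g * strpoly w)"
    by simp_all
qed

lemma fa_recognizable_Dom:
  assumes "1 + \<bar>p\<bar> < \<bar>q\<bar>"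
  shows "fa_recognizable (Dom p q)"
proof -
  let ?R = "{(u, v). u \<in> lists (Sigma q) \<and> v \<in> lists (Sigma q) \<and> sim p q (strpoly v) (1 * strpoly u)}
    \<inter> {(u, w). llex_less u w}"
  have "Dom p q = lists (Sigma q) \<inter> - Range ?R"
    unfolding Dom_def str_equiv_def lists_eq_set by (auto simp: sim_commute)
  moreover have "fa_recognizable (Range ?R)"
    by (intro fa_recognizable_Range fa_recognizable_rel2_Int fa_recognizable_rel2_sim_mult
        fa_recognizable_rel2_llex_less assms) (auto simp: llex_less_def)
  ultimately show ?thesis
    by (simp add: fa_recognizable_Int fa_recognizable_Compl fa_recognizable_lists)
qed

lemma graph_phi_eq:
  assumes "1 + \<bar>p\<bar> < \<bar>q\<bar>"
  shows "{(w, phi p q g w) | w. w \<in> Dom p q} =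
    {(u, v). u \<in> lists (Sigma q) \<and> v \<in> lists (Sigma q) \<and> sim p q (strpoly v) (g * strpoly u)}
      \<inter> Dom p q \<times> Dom p q"
    (is "?graph = ?rel \<inter> _")
proof (intro set_eqI iffI)
  fix x
  assume "x \<in> ?graph"
  then show "x \<in> ?rel \<inter> Dom p q \<times> Dom p q"
    using phi_in_Dom_sim[OF assms] by (auto simp: Dom_def)
next
  fix x
  assume "x \<in> ?rel \<inter> Dom p q \<times> Dom p q"
  then obtain u v where "x = (u, v)" "u \<in> Dom p q" "v \<in> Dom p q" "sim p q (strpoly v) (g * strpoly u)"
    by blast
  then show "x \<in> ?graph"
    using phi_eqI by blast
qed

theorem proposition2:
  fixes p q :: int and g :: "int poly"
  assumes "1 + \<bar>p\<bar> < \<bar>q\<bar>"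
  shows "fa_recognizable_rel2 {(w, phi p q g w) | w. w \<in> Dom p q}"
  unfolding graph_phi_eq[OF assms]
  by (intro fa_recognizable_rel2_Int fa_recognizable_rel2_sim_mult fa_recognizable_rel2_Times
      fa_recognizable_Dom assms)

end
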